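(* Let $0\le a<b$, let $\alpha\in(0,1]$, and let $k:[a,b]\to\mathbb{R}$ be a continuous nonnegative map, differentiable on $[a,b]$, with $k(t)\neq 0$ and $k'(t)\neq 0$. Let $f:[a,b]\to\mathbb{R}$ be continuous on $[a,b]$ and $\alpha$-differentiable at every point of $(a,b)$. Then there exists $c\in(a,b)$ such that $$D^{\alpha}(f)(c)=\frac{f(b)-f(a)}{\frac{k^{\alpha}(b)}{\alpha}-\frac{k^{\alpha}(a)}{\alpha}}.$$
   Context: For $k$ as in the claim, $f:[a,b]\to\mathbb{R}$, $\alpha\in(0,1]$ and $t\in(a,b)$, the generalized fractional derivative of $f$ of order $\alpha$ at $t$ is $$D^{\alpha}(f)(t)=f^{(\alpha)}(t):=\lim_{\varepsilon\to 0}\frac{f\left(t-k(t)+k(t)\,e^{\varepsilon\frac{(k(t))^{-\alpha}}{k'(t)}}\right)-f(t)}{\varepsilon},$$ and $f$ is called $\alpha$-differentiable at $t$ if this limit exists. Here $k^{\alpha}(x)$ denotes $(k(x))^{\alpha}$. *)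

theory Defs
  imports "HOL-Analysis.Analysis"
begin

text \<open>Difference quotient of the generalized fractional derivative.
  The kernel k is given together with its derivative function k'
  (k' t is the derivative of k at t).\<close>
definition gfrac_quot ::
  "(real \<Rightarrow> real) \<Rightarrow> (real \<Rightarrow> real) \<Rightarrow> real \<Rightarrow> (real \<Rightarrow> real) \<Rightarrow> real \<Rightarrow> real \<Rightarrow> real" where
  "gfrac_quot k k' \<alpha> f t \<epsilon> =
     (f (t - k t + k t * exp (\<epsilon> * (k t powr (-\<alpha>)) / k' t)) - f t) / \<epsilon>"

definition alpha_differentiable ::
  "(real \<Rightarrow> real) \<Rightarrow> (real \<Rightarrow> real) \<Rightarrow> real \<Rightarrow> (real \<Rightarrow> real) \<Rightarrow> real \<Rightarrow> bool" where
  "alpha_differentiable k k' \<alpha> f t \<longleftrightarrow> (\<exists>L. (gfrac_quot k k' \<alpha> f t \<longlongrightarrow> L) (at 0))"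

definition gfrac_deriv ::
  "(real \<Rightarrow> real) \<Rightarrow> (real \<Rightarrow> real) \<Rightarrow> real \<Rightarrow> (real \<Rightarrow> real) \<Rightarrow> real \<Rightarrow> real" where
  "gfrac_deriv k k' \<alpha> f t = Lim (at 0) (gfrac_quot k k' \<alpha> f t)"

end

theory Submission
  imports Defs
begin

text \<open>Where k is positive, the generalized fractional derivative is a rescaled ordinary
  derivative, \<open>D\<^sup>\<alpha> f = k\<^sup>1\<^sup>-\<^sup>\<alpha> f' / k'\<close>: its difference quotient is that of
  \<open>f \<circ> \<gamma>\<close> at 0 for \<open>\<gamma> \<epsilon> = t - k t + k t exp (\<epsilon> k\<^sup>-\<^sup>\<alpha> / k')\<close>, and \<open>\<gamma>\<close> is a smooth
  change of variables near 0 with \<open>\<gamma> 0 = t\<close> and \<open>\<gamma>' 0 = k\<^sup>1\<^sup>-\<^sup>\<alpha> / k'\<close>. Since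
  \<open>(k\<^sup>\<alpha>/\<alpha>)' = k\<^sup>\<alpha>\<^sup>-\<^sup>1 k'\<close>, the claim is then Cauchy's mean value theorem for f and
  \<open>k\<^sup>\<alpha>/\<alpha>\<close>; its denominator does not vanish because \<open>k' \<noteq> 0\<close> forces \<open>k a \<noteq> k b\<close>.\<close>

lemma has_real_derivative_of_exp_reparametrization:
  fixes f :: "real \<Rightarrow> real" and r c t L :: real
  assumes r: "r > 0" and c: "c \<noteq> 0"
    and lim: "((\<lambda>e. (f (t - r + r * exp (e * c)) - f t) / e) \<longlongrightarrow> L) (at 0)"
  shows "(f has_real_derivative L / (r * c)) (at t)"
proof -
  define F where "F e = f (t - r + r * exp (e * c))" for e
  define \<psi> where "\<psi> s = ln ((s - t + r) / r) / c" for s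
  have "\<psi> t = 0"
    using r by (simp add: \<psi>_def)
  moreover have "(F has_real_derivative L) (at 0)"
    using lim unfolding DERIV_def F_def by simp
  ultimately have F: "(F has_real_derivative L) (at (\<psi> t))"
    by simp
  have \<psi>: "(\<psi> has_real_derivative 1 / (r * c)) (at t)"
    unfolding \<psi>_def using r c by (auto intro!: derivative_eq_intros)
  have chain: "((\<lambda>s. F (\<psi> s)) has_real_derivative L * (1 / (r * c))) (at t)"
    using DERIV_chain2[OF F \<psi>] .
  have F_\<psi>: "F (\<psi> s) = f s" if "s \<in> {t - r<..}" for s
  proof -
    have "exp (\<psi> s * c) = (s - t + r) / r"
      using that r c by (simp add: \<psi>_def)
    then have "t - r + r * exp (\<psi> s * c) = s"
      using r by simp
    then show ?thesis
      by (simp add: F_def)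
  qed
  have "t \<in> {t - r<..}"
    using r by simp
  from has_field_derivative_transform_within_open[OF chain open_greaterThan this F_\<psi>]
  show ?thesis
    by simp
qed

lemma alpha_differentiable_imp_has_real_derivative:
  assumes "k t > 0" and "k' t \<noteq> 0" and "alpha_differentiable k k' \<alpha> f t"
  shows "(f has_real_derivative gfrac_deriv k k' \<alpha> f t * (k t powr (\<alpha> - 1) * k' t)) (at t)"
proof -
  obtain L where L: "(gfrac_quot k k' \<alpha> f t \<longlongrightarrow> L) (at 0)"
    using assms(3) unfolding alpha_differentiable_def by blast
  have "((\<lambda>e. (f (t - k t + k t * exp (e * (k t powr - \<alpha> / k' t))) - f t) / e) \<longlongrightarrow> L) (at 0)"
    using L unfolding gfrac_quot_def by (simp add: times_divide_eq_right)
  then have "(f has_real_derivative L / (k t * (k t powr - \<alpha> / k' t))) (at t)"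
    using assms(1,2) by (intro has_real_derivative_of_exp_reparametrization) auto
  moreover have "k t powr (\<alpha> - 1) = inverse (k t * k t powr - \<alpha>)"
    using assms(1) by (simp add: powr_mult_base powr_minus[symmetric])
  moreover have "gfrac_deriv k k' \<alpha> f t = L"
    unfolding gfrac_deriv_def using L by (rule tendsto_Lim[rotated]) simp
  ultimately show ?thesis
    using assms(2) by (simp add: field_simps)
qed

lemma cauchy_mean_value_theorem:
  fixes f g :: "real \<Rightarrow> real"
  assumes "a < b"
    and "continuous_on {a..b} f" and "continuous_on {a..b} g"
    and "\<And>x. a < x \<Longrightarrow> x < b \<Longrightarrow> (f has_real_derivative f' x) (at x)"
    and "\<And>x. a < x \<Longrightarrow> x < b \<Longrightarrow> (g has_real_derivative g' x) (at x)"
  shows "\<exists>c\<in>{a<..<b}. (f b - f a) * g' c = (g b - g a) * f' c"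
proof -
  define h where "h x = (f b - f a) * g x - (g b - g a) * f x" for x
  define h' where "h' x = (f b - f a) * g' x - (g b - g a) * f' x" for x
  have "\<exists>c. a < c \<and> c < b \<and> (\<lambda>v. v * h' c) = (\<lambda>v. 0)"
  proof (rule Rolle_deriv[OF \<open>a < b\<close>])
    show "h a = h b"
      by (simp add: h_def algebra_simps)
    show "continuous_on {a..b} h"
      unfolding h_def using assms(2,3) by (intro continuous_intros)
    fix x assume "a < x" "x < b"
    then have "(h has_real_derivative h' x) (at x)"
      unfolding h_def h'_def using assms(4,5) by (auto intro!: derivative_eq_intros)
    then show "(h has_derivative (\<lambda>v. v * h' x)) (at x)"
      by (simp add: has_field_derivative_def mult_commute_abs)
  qed
  then obtain c where "a < c" "c < b" "h' c = 0"
    by (metis mult_1)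
  then show ?thesis
    by (auto simp: h'_def)
qed

lemma neq_endpoints_of_nonzero_derivative:
  fixes k :: "real \<Rightarrow> real"
  assumes "a < b" and "continuous_on {a..b} k"
    and "\<And>x. a < x \<Longrightarrow> x < b \<Longrightarrow> (k has_real_derivative k' x) (at x)"
    and "\<And>x. a < x \<Longrightarrow> x < b \<Longrightarrow> k' x \<noteq> 0"
  shows "k a \<noteq> k b"
proof -
  obtain c where "c \<in> {a<..<b}" "(k b - k a) * 1 = (b - a) * k' c"
    using cauchy_mean_value_theorem[OF assms(1,2) continuous_on_id assms(3) DERIV_ident] by blast
  then show ?thesis
    using assms(1) assms(4)[of c] by auto
qed

lemma powr_eq_powr_imp_eq:
  fixes x y a :: real
  assumes "x \<ge> 0" and "y \<ge> 0" and "a > 0" and "x powr a = y powr a"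
  shows "x = y"
  using assms by (metis linorder_neq_iff powr_less_mono2)

theorem mainTheorem5:
  fixes a b \<alpha> :: real and k k' f :: "real \<Rightarrow> real"
  assumes "0 \<le> a" and "a < b"
    and "0 < \<alpha>" and "\<alpha> \<le> 1"
    and "continuous_on {a..b} k"
    and "\<And>t. t \<in> {a..b} \<Longrightarrow> k t \<ge> 0"
    and "\<And>t. t \<in> {a..b} \<Longrightarrow> (k has_real_derivative k' t) (at t within {a..b})"
    and "\<And>t. t \<in> {a..b} \<Longrightarrow> k t \<noteq> 0"
    and "\<And>t. t \<in> {a..b} \<Longrightarrow> k' t \<noteq> 0"
    and "continuous_on {a..b} f"
    and "\<And>t. t \<in> {a<..<b} \<Longrightarrow> alpha_differentiable k k' \<alpha> f t"
  shows "\<exists>c\<in>{a<..<b}. gfrac_deriv k k' \<alpha> f c =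
           (f b - f a) / (k b powr \<alpha> / \<alpha> - k a powr \<alpha> / \<alpha>)"
proof -
  define H where "H x = k x powr \<alpha> / \<alpha>" for x
  have kpos: "k t > 0" if "t \<in> {a..b}" for t
    using assms(6,8) that by (simp add: order_le_neq_trans)
  have k': "(k has_real_derivative k' t) (at t)" if "a < t" "t < b" for t
    using assms(7)[of t] that at_within_Icc_at[of a t b] by simp
  have H': "(H has_real_derivative k t powr (\<alpha> - 1) * k' t) (at t)" if "a < t" "t < b" for t
    unfolding H_def using kpos[of t] k'[OF that] that assms(3)
    by (auto intro!: derivative_eq_intros simp: field_simps)
  have f': "(f has_real_derivative gfrac_deriv k k' \<alpha> f t * (k t powr (\<alpha> - 1) * k' t)) (at t)"
    if "a < t" "t < b" for t
    using that kpos[of t] assms(9)[of t] assms(11)[of t]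
    by (intro alpha_differentiable_imp_has_real_derivative) auto
  have "k a \<noteq> k b"
    using neq_endpoints_of_nonzero_derivative[OF assms(2,5) k'] assms(9) by simp
  then have "H b \<noteq> H a"
    using powr_eq_powr_imp_eq[of "k b" "k a" \<alpha>] kpos[of a] kpos[of b] assms(2,3)
    by (auto simp: H_def)
  have "continuous_on {a..b} H"
    unfolding H_def by (intro continuous_intros assms(5)) (use kpos assms(3) in fastforce)+
  then obtain c where c: "c \<in> {a<..<b}"
    and "(f b - f a) * (k c powr (\<alpha> - 1) * k' c)
           = (H b - H a) * (gfrac_deriv k k' \<alpha> f c * (k c powr (\<alpha> - 1) * k' c))"
    using cauchy_mean_value_theorem[OF assms(2,10) _ f' H'] by blast
  moreover have "k c powr (\<alpha> - 1) * k' c \<noteq> 0"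
    using c kpos[of c] assms(9)[of c] by simp
  ultimately have "f b - f a = (H b - H a) * gfrac_deriv k k' \<alpha> f c"
    by (metis mult.assoc mult_cancel_right)
  then have "gfrac_deriv k k' \<alpha> f c = (f b - f a) / (H b - H a)"
    using \<open>H b \<noteq> H a\<close> by simp
  with c show ?thesis
    unfolding H_def by blast
qed

end
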